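(* There is a one-pass streaming algorithm in the VA model which, given $\varepsilon\in(0,1)$ and an integer $T\ge 1$, and given as input stream a graph $G=(V,E)$ with $|V|=n$ together with a coloring $f:V\to[C]$ satisfying the promise $|E_M|\ge T$, outputs an estimate $\widehat m$ with $|\widehat m-|E_M||\le\varepsilon|E_M|$ with high probability. With high probability it uses $\widetilde{\mathcal O}\!\left(\min\left\{|V|,\frac{|V|^2}{T}\right\}\right)$ space.
   Context: Graphs are simple and undirected, $|V|=n$, $|E|=m$. A coloring $f:V\to[C]$ is given, where $[C]=\{1,\dots,C\}$. An edge $(u,v)$ is monochromatic (conflicting) if $f(u)=f(v)$, and $E_M\subseteq E$ denotes the set of monochromatic edges. VA (Vertex Arrival) streaming model: the vertex identities $V=\{v_1,\dots,v_n\}$ are known to the algorithm in advance. The vertices are revealed one at a time in an arbitrary order that is unknown in advance. When a vertex $v$ is revealed, its color $f(v)$ is revealed, and then all edges between $v$ and previously revealed vertices are revealed one by one. The color of a previously revealed vertex is not revealed again, so the algorithm knows $f(u)$ for an earlier vertex $u$ only if it stored it. "With high probability" means with probability at least $1-1/n^{c}$ for an absolute constant $c>0$. $\widetilde{\mathcal O}(\cdot)$ hides factors polynomial in $\log n$ and $1/\varepsilon$. Space is counted in words of $O(\log n)$ bits. *)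

theory Defs
  imports "HOL-Probability.Probability"
begin

text \<open>Vertices are 0..<n (identities known in advance).
  A stream item is either the arrival of a vertex together with its colour,
  or an edge between an earlier revealed vertex u and the current vertex v.\<close>

datatype va_item = Vtx nat nat | Edg nat nat

definition simple_graph :: "nat \<Rightarrow> nat set set \<Rightarrow> bool" where
  "simple_graph n E \<longleftrightarrow> (\<forall>e\<in>E. \<exists>u v. e = {u, v} \<and> u \<noteq> v \<and> u < n \<and> v < n)"

definition coloring :: "nat \<Rightarrow> nat \<Rightarrow> (nat \<Rightarrow> nat) \<Rightarrow> bool" where
  "coloring n C f \<longleftrightarrow> (\<forall>v<n. f v \<in> {1..C})"

definition mono_edges :: "nat set set \<Rightarrow> (nat \<Rightarrow> nat) \<Rightarrow> nat set set" where
  "mono_edges E f = {e \<in> E. \<exists>u v. e = {u, v} \<and> f u = f v}"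

text \<open>The valid VA streams for (G,f): the vertices arrive in an arbitrary order
  sigma; when vertex sigma!i arrives, its colour is revealed, then all edges to
  previously revealed vertices are revealed one by one, in an arbitrary order L i.\<close>
definition va_stream :: "nat \<Rightarrow> nat set set \<Rightarrow> (nat \<Rightarrow> nat) \<Rightarrow> va_item list \<Rightarrow> bool" where
  "va_stream n E f s \<longleftrightarrow>
     (\<exists>(\<sigma>::nat list) (L::nat \<Rightarrow> nat list).
        distinct \<sigma> \<and> set \<sigma> = {0..<n} \<and>
        (\<forall>i<n. distinct (L i) \<and>
               set (L i) = {u \<in> set (take i \<sigma>). {u, \<sigma> ! i} \<in> E}) \<and>
        s = concat (map (\<lambda>i. Vtx (\<sigma> ! i) (f (\<sigma> ! i)) # map (\<lambda>u. Edg u (\<sigma> ! i)) (L i))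
                        [0..<n]))"

text \<open>Run of a randomized one-pass streaming algorithm with (probabilistic)
  transition function upd: returns the distribution of the whole trace of
  memory states (initial state first, final state last).\<close>
fun va_run :: "('s \<Rightarrow> 'i \<Rightarrow> 's pmf) \<Rightarrow> 's \<Rightarrow> 'i list \<Rightarrow> 's list pmf" where
  "va_run upd s [] = return_pmf [s]"
| "va_run upd s (x # xs) = bind_pmf (upd s x) (\<lambda>s'. map_pmf (\<lambda>tr. s # tr) (va_run upd s' xs))"

text \<open>Space used along a trace, in words: memory states are lists of words.\<close>
definition space_used :: "nat list list \<Rightarrow> nat" where
  "space_used tr = Max (length ` set tr)"

end

theory Submission
  imports Defs
begin

text \<open>The algorithm tracks a list of vertices; for each tracked vertex \<open>a\<close> it stores the colour
  of \<open>a\<close> once \<open>a\<close> has arrived and counts the monochromatic edges from \<open>a\<close> to vertices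
  arriving after \<open>a\<close>. Charging every monochromatic edge to its earlier endpoint, these later
  monochromatic degrees are at most \<open>n\<close> and sum to \<open>|E_M|\<close>.

  If the sample size \<open>k = \<lceil>4n\<^sup>2/(\<epsilon>\<^sup>2T)\<rceil>\<close> is at least \<open>n\<close>, all vertices are tracked and
  the count is exact. Otherwise each of \<open>R = \<lceil>8 ln (n + 2)\<rceil>\<close> independent copies samples \<open>k\<close>
  vertices uniformly with replacement. The rescaled sum of their degrees is an unbiased
  estimate of \<open>|E_M|\<close> with variance at most \<open>n\<^sup>2|E_M|/k\<close>, so by Chebyshev it is
  \<open>\<epsilon>\<close>-accurate with probability at least \<open>3/4\<close>, and by Hoeffding the median of the copies
  fails with probability at most \<open>exp (-R/8) \<le> 1/n\<close>. The memory holds \<open>1 + 3n\<close> words in the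
  first case and \<open>1 + 3Rk\<close> words in the second; both are \<open>O(log n \<epsilon>\<^sup>-\<^sup>2 min(n, n\<^sup>2/T))\<close>
  because \<open>T \<le> |E_M| \<le> n\<^sup>2\<close>.\<close>

fun fold_trace :: "('s \<Rightarrow> 'i \<Rightarrow> 's) \<Rightarrow> 's \<Rightarrow> 'i list \<Rightarrow> 's list" where
  "fold_trace F s [] = [s]"
| "fold_trace F s (x # xs) = s # fold_trace F (F s x) xs"

lemma va_run_return_pmf:
  "va_run (\<lambda>s x. return_pmf (F s x)) s xs = return_pmf (fold_trace F s xs)"
  by (induction xs arbitrary: s) (auto simp: bind_return_pmf)

lemma fold_trace_ne_Nil [simp]: "fold_trace F s xs \<noteq> []"
  by (cases xs) auto

lemma last_fold_trace: "last (fold_trace F s xs) = foldl F s xs"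
  by (induction xs arbitrary: s) auto

lemma start_in_fold_trace: "s \<in> set (fold_trace F s xs)"
  by (cases xs) auto

lemma fold_trace_map:
  assumes "\<And>s x. G (h s) x = h (F s x)"
  shows "fold_trace G (h s) xs = map h (fold_trace F s xs)"
  by (induction xs arbitrary: s) (simp_all add: assms)

lemma fold_trace_invariant:
  assumes "P s" and "\<And>t x. P t \<Longrightarrow> x \<in> set xs \<Longrightarrow> P (F t x)"
  shows "\<forall>t\<in>set (fold_trace F s xs). P t"
  using assms by (induction xs arbitrary: s) auto

type_synonym tracker = "nat \<times> nat \<times> nat"
type_synonym counter_state = "nat \<times> tracker list"

definition encode_state :: "counter_state \<Rightarrow> nat list" where
  "encode_state st = fst st # concat (map (\<lambda>(a, b, c). [a, b, c]) (snd st))"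

fun triples :: "nat list \<Rightarrow> tracker list" where
  "triples (a # b # c # ws) = (a, b, c) # triples ws"
| "triples _ = []"

fun decode_state :: "nat list \<Rightarrow> counter_state" where
  "decode_state (w # ws) = (w, triples ws)"
| "decode_state [] = (0, [])"

lemma decode_encode_state [simp]: "decode_state (encode_state st) = st"
proof -
  have "triples (concat (map (\<lambda>(a, b, c). [a, b, c]) ts)) = ts" for ts
    by (induction ts) auto
  then show ?thesis
    by (simp add: encode_state_def)
qed

lemma length_encode_state: "length (encode_state st) = 1 + 3 * length (snd st)"
proof -
  have "length (concat (map (\<lambda>(a, b, c). [a, b, c]) ts)) = 3 * length ts" for ts :: "tracker list"
    by (induction ts) auto
  then show ?thesis
    by (simp add: encode_state_def)
qed

lemma set_encode_state:
  "set (encode_state st) = insert (fst st) (\<Union>(a, b, c)\<in>set (snd st). {a, b, c})"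
  by (auto simp: encode_state_def)

text \<open>A tracker \<open>(a, b, c)\<close> follows the vertex \<open>a\<close>: \<open>b\<close> is its colour once \<open>a\<close> has arrived
  (0 before), and \<open>c\<close> counts the edges from \<open>a\<close> to later vertices of colour \<open>b\<close>; \<open>cur\<close> is
  the colour of the vertex that arrived last. The counter saturates at \<open>n\<close> only so that
  every memory word stays at most \<open>n + C\<close>.\<close>

fun track_step :: "nat \<Rightarrow> nat \<Rightarrow> tracker \<Rightarrow> va_item \<Rightarrow> tracker" where
  "track_step n cur (a, b, c) (Vtx v col) = (a, if a = v then col else b, c)"
| "track_step n cur (a, b, c) (Edg u v) = (a, b, if a = u \<and> b = cur \<and> c < n then Suc c else c)"

fun current_colour :: "nat \<Rightarrow> va_item \<Rightarrow> nat" where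
  "current_colour cur (Vtx v col) = col"
| "current_colour cur (Edg u v) = cur"

definition counter_step :: "nat \<Rightarrow> counter_state \<Rightarrow> va_item \<Rightarrow> counter_state" where
  "counter_step n st x = (current_colour (fst st) x, map (\<lambda>t. track_step n (fst st) t x) (snd st))"

fun track_fold :: "nat \<Rightarrow> nat \<Rightarrow> tracker \<Rightarrow> va_item list \<Rightarrow> tracker" where
  "track_fold n cur t [] = t"
| "track_fold n cur t (x # xs) = track_fold n (current_colour cur x) (track_step n cur t x) xs"

lemma foldl_counter_step:
  "foldl (counter_step n) (cur, ts) xs = (foldl current_colour cur xs, map (\<lambda>t. track_fold n cur t xs) ts)"
  by (induction xs arbitrary: cur ts) (simp_all add: counter_step_def o_def)

lemma track_fold_append:
  "track_fold n cur t (xs @ ys) = track_fold n (foldl current_colour cur xs) (track_fold n cur t xs) ys"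
  by (induction xs arbitrary: cur t) auto

lemma track_fold_edges:
  "distinct us \<Longrightarrow> track_fold n col (a, b, c) (map (\<lambda>u. Edg u v) us)
     = (a, b, if a \<in> set us \<and> b = col \<and> c < n then Suc c else c)"
  by (induction us arbitrary: c) auto

lemma length_counter_step [simp]: "length (snd (counter_step n st x)) = length (snd st)"
  by (simp add: counter_step_def)

lemma encode_state_subset_iff:
  "set (encode_state st) \<subseteq> A \<longleftrightarrow> fst st \<in> A \<and> (\<forall>(a, b, c)\<in>set (snd st). {a, b, c} \<subseteq> A)"
  by (auto simp: set_encode_state)

lemma track_step_bounded:
  assumes "{a, b, c} \<subseteq> {..B}" and "n \<le> B" and "\<And>v col. x = Vtx v col \<Longrightarrow> col \<le> B"
  shows "case track_step n cur (a, b, c) x of (a', b', c') \<Rightarrow> {a', b', c'} \<subseteq> {..B}"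
  using assms by (cases x) auto

lemma counter_step_bounded:
  assumes "set (encode_state st) \<subseteq> {..B}" and "n \<le> B" and "\<And>v col. x = Vtx v col \<Longrightarrow> col \<le> B"
  shows "set (encode_state (counter_step n st x)) \<subseteq> {..B}"
proof -
  have "current_colour (fst st) x \<le> B"
    using assms by (cases x) (auto simp: set_encode_state)
  moreover have "case track_step n (fst st) t x of (a', b', c') \<Rightarrow> {a', b', c'} \<subseteq> {..B}"
    if "t \<in> set (snd st)" for t
  proof (cases t)
    case (fields a b c)
    then show ?thesis
      using that assms track_step_bounded[of a b c B n x "fst st"]
      by (auto simp: encode_state_subset_iff)
  qed
  ultimately show ?thesis
    unfolding encode_state_subset_iff by (simp add: counter_step_def)
qed

definition va_block :: "(nat \<Rightarrow> nat) \<Rightarrow> nat list \<Rightarrow> (nat \<Rightarrow> nat list) \<Rightarrow> nat \<Rightarrow> va_item list" where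
  "va_block f \<sigma> L i = Vtx (\<sigma> ! i) (f (\<sigma> ! i)) # map (\<lambda>u. Edg u (\<sigma> ! i)) (L i)"

locale va_order =
  fixes n :: nat and E :: "nat set set" and \<sigma> :: "nat list" and L :: "nat \<Rightarrow> nat list"
  assumes distinct_order: "distinct \<sigma>"
    and set_order: "set \<sigma> = {0..<n}"
    and edge_lists: "\<And>i. i < n \<Longrightarrow> distinct (L i) \<and> set (L i) = {u \<in> set (take i \<sigma>). {u, \<sigma> ! i} \<in> E}"

lemma va_streamE:
  assumes "va_stream n E f s"
  obtains \<sigma> L where "va_order n E \<sigma> L" and "s = concat (map (va_block f \<sigma> L) [0..<n])"
  using assms unfolding va_stream_def va_order_def va_block_def by blast

context va_order
begin

definition later_mono_degree :: "(nat \<Rightarrow> nat) \<Rightarrow> nat \<Rightarrow> nat" where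
  "later_mono_degree f a = card {j. j < n \<and> a \<in> set (L j) \<and> f a = f (\<sigma> ! j)}"

lemma length_order: "length \<sigma> = n"
  using distinct_card[OF distinct_order] set_order by simp

lemma order_nth_eq_iff: "i < n \<Longrightarrow> j < n \<Longrightarrow> \<sigma> ! i = \<sigma> ! j \<longleftrightarrow> i = j"
  using distinct_order length_order by (simp add: nth_eq_iff_index_eq)

lemma order_nth_less: "i < n \<Longrightarrow> \<sigma> ! i < n"
  using set_order length_order nth_mem by fastforce

lemma vertex_as_order_nth: "v < n \<Longrightarrow> \<exists>p<n. v = \<sigma> ! p"
  using set_order length_order by (metis atLeastLessThan_iff in_set_conv_nth zero_le)

lemma mem_edge_list_iff:
  assumes "j < n"
  shows "a \<in> set (L j) \<longleftrightarrow> (\<exists>p<j. a = \<sigma> ! p \<and> {\<sigma> ! p, \<sigma> ! j} \<in> E)"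
  using edge_lists[OF assms] assms length_order by (auto simp: in_set_conv_nth)

lemma later_mono_degree_le: "later_mono_degree f a \<le> n"
proof -
  have "later_mono_degree f a \<le> card {..<n}"
    unfolding later_mono_degree_def by (rule card_mono) auto
  then show ?thesis
    by simp
qed

lemma track_fold_blocks:
  assumes "i \<le> n"
  shows "track_fold n cur (a, 0, 0) (concat (map (va_block f \<sigma> L) [0..<i]))
     = (a, if a \<in> set (take i \<sigma>) then f a else 0, card {j. j < i \<and> a \<in> set (L j) \<and> f a = f (\<sigma> ! j)})"
  using assms
proof (induction i)
  case 0
  then show ?case by simp
next
  case (Suc i)
  then have i: "i < n" by simp
  define c where "c = card {j. j < i \<and> a \<in> set (L j) \<and> f a = f (\<sigma> ! j)}"
  have "c \<le> card {..<i}"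
    unfolding c_def by (rule card_mono) auto
  then have c_lt: "c < n"
    using i by simp
  have take_Suc: "take (Suc i) \<sigma> = take i \<sigma> @ [\<sigma> ! i]"
    using i length_order by (simp add: take_Suc_conv_app_nth)
  have colour: "(if a = \<sigma> ! i then f (\<sigma> ! i) else if a \<in> set (take i \<sigma>) then f a else 0)
      = (if a \<in> set (take (Suc i) \<sigma>) then f a else 0)"
    unfolding take_Suc by auto
  have "a \<in> set (L i) \<Longrightarrow> a \<in> set (take (Suc i) \<sigma>)"
    using edge_lists[OF i] take_Suc by auto
  moreover have "{j. j < Suc i \<and> a \<in> set (L j) \<and> f a = f (\<sigma> ! j)}
      = (if a \<in> set (L i) \<and> f a = f (\<sigma> ! i) then insert i else id) {j. j < i \<and> a \<in> set (L j) \<and> f a = f (\<sigma> ! j)}"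
    by (auto simp: less_Suc_eq)
  ultimately show ?case
    using Suc edge_lists[OF i] c_lt colour
    by (simp add: track_fold_append va_block_def track_fold_edges c_def[symmetric])
       (auto simp: c_def)
qed

lemma counts_after_stream:
  "map (snd \<circ> snd) (snd (foldl (counter_step n) (cur, map (\<lambda>a. (a, 0, 0)) as) (concat (map (va_block f \<sigma> L) [0..<n]))))
     = map (later_mono_degree f) as"
  by (simp add: foldl_counter_step track_fold_blocks later_mono_degree_def)

lemma bij_betw_later_mono_pairs:
  assumes "simple_graph n E"
  shows "bij_betw (\<lambda>(a, j). {a, \<sigma> ! j})
           (SIGMA a:{..<n}. {j. j < n \<and> a \<in> set (L j) \<and> f a = f (\<sigma> ! j)}) (mono_edges E f)"
proof (rule bij_betw_imageI)
  show "inj_on (\<lambda>(a, j). {a, \<sigma> ! j}) (SIGMA a:{..<n}. {j. j < n \<and> a \<in> set (L j) \<and> f a = f (\<sigma> ! j)})"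
  proof (rule inj_onI, clarsimp)
    fix a j a' j'
    assume "a < n" "j < n" "a \<in> set (L j)" "a' < n" "j' < n" "a' \<in> set (L j')"
      and same: "{a, \<sigma> ! j} = {a', \<sigma> ! j'}"
    then obtain p p' where "p < j" "a = \<sigma> ! p" "p' < j'" "a' = \<sigma> ! p'"
      by (auto simp: mem_edge_list_iff)
    with same \<open>j < n\<close> \<open>j' < n\<close> show "a = a' \<and> j = j'"
      by (auto simp: doubleton_eq_iff order_nth_eq_iff)
  qed
next
  show "(\<lambda>(a, j). {a, \<sigma> ! j}) ` (SIGMA a:{..<n}. {j. j < n \<and> a \<in> set (L j) \<and> f a = f (\<sigma> ! j)})
      = mono_edges E f"
  proof (intro equalityI subsetI)
    fix e
    assume "e \<in> (\<lambda>(a, j). {a, \<sigma> ! j}) ` (SIGMA a:{..<n}. {j. j < n \<and> a \<in> set (L j) \<and> f a = f (\<sigma> ! j)})"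
    then show "e \<in> mono_edges E f"
      using edge_lists by (auto simp: mono_edges_def)
  next
    fix e
    assume "e \<in> mono_edges E f"
    then obtain u v where e: "e \<in> E" "e = {u, v}" "f u = f v" "u \<noteq> v" "u < n" "v < n"
      using assms unfolding mono_edges_def simple_graph_def by (force simp: doubleton_eq_iff)
    then obtain p q where pq: "p < n" "q < n" "u = \<sigma> ! p" "v = \<sigma> ! q" "p \<noteq> q"
      using vertex_as_order_nth by metis
    have later: "(\<sigma> ! p', q') \<in> (SIGMA a:{..<n}. {j. j < n \<and> a \<in> set (L j) \<and> f a = f (\<sigma> ! j)})"
      if "p' < q'" "q' < n" "{\<sigma> ! p', \<sigma> ! q'} = e" for p' q'
      using that e pq set_order length_order
      by (auto simp: mem_edge_list_iff insert_commute doubleton_eq_iff)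
    show "e \<in> (\<lambda>(a, j). {a, \<sigma> ! j}) ` (SIGMA a:{..<n}. {j. j < n \<and> a \<in> set (L j) \<and> f a = f (\<sigma> ! j)})"
    proof (cases "p < q")
      case True
      then show ?thesis
        using later[of p q] pq e by force
    next
      case False
      then show ?thesis
        using later[of q p] pq e by (force simp: insert_commute)
    qed
  qed
qed

lemma sum_later_mono_degree:
  assumes "simple_graph n E"
  shows "(\<Sum>a<n. later_mono_degree f a) = card (mono_edges E f)"
proof -
  have "(\<Sum>a<n. later_mono_degree f a)
      = card (SIGMA a:{..<n}. {j. j < n \<and> a \<in> set (L j) \<and> f a = f (\<sigma> ! j)})"
    unfolding later_mono_degree_def by (subst card_SigmaI) auto
  also have "\<dots> = card (mono_edges E f)"
    by (rule bij_betw_same_card[OF bij_betw_later_mono_pairs[OF assms]])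
  finally show ?thesis .
qed

lemma vertex_colours_le:
  assumes "coloring n C f" and "Vtx v col \<in> set (concat (map (va_block f \<sigma> L) [0..<n]))"
  shows "col \<le> C"
  using assms order_nth_less by (auto simp: va_block_def coloring_def)

end

lemma finite_set_Pi_pmf:
  assumes "finite A" and "\<And>x. x \<in> A \<Longrightarrow> finite (set_pmf (p x))"
  shows "finite (set_pmf (Pi_pmf A dflt p))"
  using assms by (auto simp: set_Pi_pmf)

lemma expectation_component_Pi_pmf:
  assumes "i \<in> A" and "finite A"
  shows "measure_pmf.expectation (Pi_pmf A dflt p) (\<lambda>h. \<phi> (h i)) = measure_pmf.expectation (p i) (\<phi> :: _ \<Rightarrow> real)"
proof -
  have "measure_pmf.expectation (Pi_pmf A dflt p) (\<lambda>h. \<phi> (h i))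
      = measure_pmf.expectation (map_pmf (\<lambda>h. h i) (Pi_pmf A dflt p)) \<phi>"
    by simp
  then show ?thesis
    using assms by (simp add: Pi_pmf_component)
qed

lemma prod_eq_two_factors:
  assumes "finite A" "i \<in> A" "j \<in> A" "i \<noteq> j" and "\<And>x. x \<in> A \<Longrightarrow> x \<noteq> i \<Longrightarrow> x \<noteq> j \<Longrightarrow> F x = 1"
  shows "prod F A = F i * F j"
proof -
  have "prod F A = F i * prod F (A - {i})"
    using assms(1,2) by (rule prod.remove)
  also have "prod F (A - {i}) = F j * prod F (A - {i} - {j})"
    using assms(1-4) by (intro prod.remove) auto
  also have "prod F (A - {i} - {j}) = 1"
    using assms(5) by (intro prod.neutral) auto
  finally show ?thesis
    by simp
qed

lemma expectation_mult_components_Pi_pmf: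
  fixes g :: "'a \<Rightarrow> real"
  assumes "i \<in> A" "j \<in> A" "i \<noteq> j" and "finite A" and fin: "finite (set_pmf p)"
    and nonneg: "\<And>x. x \<in> set_pmf p \<Longrightarrow> 0 \<le> g x"
  shows "measure_pmf.expectation (Pi_pmf A dflt (\<lambda>_. p)) (\<lambda>h. g (h i) * g (h j))
           = (measure_pmf.expectation p g)\<^sup>2"
proof -
  define F where "F = (\<lambda>x v. if x = i \<or> x = j then g v else 1)"
  have "(\<Prod>x\<in>A. F x (h x)) = g (h i) * g (h j)" for h
    using assms(1-4) by (subst prod_eq_two_factors[of A i j]) (auto simp: F_def)
  then have "measure_pmf.expectation (Pi_pmf A dflt (\<lambda>_. p)) (\<lambda>h. g (h i) * g (h j))
      = measure_pmf.expectation (Pi_pmf A dflt (\<lambda>_. p)) (\<lambda>h. \<Prod>x\<in>A. F x (h x))"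
    by simp
  also have "\<dots> = (\<Prod>x\<in>A. measure_pmf.expectation p (F x))"
    using assms by (intro expectation_prod_Pi_pmf integrable_measure_pmf_finite) (auto simp: F_def)
  also have "\<dots> = (measure_pmf.expectation p g)\<^sup>2"
    using assms(1-4) by (subst prod_eq_two_factors[of A i j]) (auto simp: F_def power2_eq_square)
  finally show ?thesis .
qed

lemma variance_sum_Pi_pmf_iid:
  fixes p :: "'a pmf" and g :: "'a \<Rightarrow> real" and k :: nat and dflt :: 'a
  assumes fin: "finite (set_pmf p)" and nonneg: "\<And>x. x \<in> set_pmf p \<Longrightarrow> 0 \<le> g x"
  defines "Q \<equiv> Pi_pmf {..<k} dflt (\<lambda>_. p)"
  shows "measure_pmf.expectation Q (\<lambda>h. \<Sum>i<k. g (h i)) = k * measure_pmf.expectation p g"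
    and "measure_pmf.variance Q (\<lambda>h. \<Sum>i<k. g (h i)) = k * measure_pmf.variance p g"
proof -
  have integrable: "integrable (measure_pmf Q) \<phi>" for \<phi> :: "_ \<Rightarrow> real"
    unfolding Q_def by (intro integrable_measure_pmf_finite finite_set_Pi_pmf fin) auto
  have component: "measure_pmf.expectation Q (\<lambda>h. \<phi> (h i)) = measure_pmf.expectation p \<phi>"
    if "i < k" for i and \<phi> :: "_ \<Rightarrow> real"
    unfolding Q_def using that by (simp add: expectation_component_Pi_pmf)
  show mean: "measure_pmf.expectation Q (\<lambda>h. \<Sum>i<k. g (h i)) = k * measure_pmf.expectation p g"
    by (simp add: Bochner_Integration.integral_sum integrable component)
  define \<mu> where "\<mu> = measure_pmf.expectation p g"
  define \<mu>2 where "\<mu>2 = measure_pmf.expectation p (\<lambda>x. (g x)\<^sup>2)"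
  have pairs: "measure_pmf.expectation Q (\<lambda>h. g (h i) * g (h j)) = (if i = j then \<mu>2 else \<mu>\<^sup>2)"
    if "i < k" "j < k" for i j
    using that fin nonneg component[of i "\<lambda>x. (g x)\<^sup>2"]
    by (auto simp: Q_def \<mu>_def \<mu>2_def power2_eq_square expectation_mult_components_Pi_pmf)
  have "measure_pmf.expectation Q (\<lambda>h. (\<Sum>i<k. g (h i))\<^sup>2)
      = (\<Sum>i<k. \<Sum>j<k. measure_pmf.expectation Q (\<lambda>h. g (h i) * g (h j)))"
    by (simp add: power2_eq_square sum_product Bochner_Integration.integral_sum integrable)
  also have "\<dots> = (\<Sum>i<k. \<Sum>j<k. \<mu>\<^sup>2 + (if i = j then \<mu>2 - \<mu>\<^sup>2 else 0))"
    by (intro sum.cong refl) (simp add: pairs)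
  also have "\<dots> = real k * real k * \<mu>\<^sup>2 + real k * (\<mu>2 - \<mu>\<^sup>2)"
    by (simp add: sum.distrib algebra_simps)
  finally have square: "measure_pmf.expectation Q (\<lambda>h. (\<Sum>i<k. g (h i))\<^sup>2)
      = real k * real k * \<mu>\<^sup>2 + real k * (\<mu>2 - \<mu>\<^sup>2)" .
  have variance_p: "measure_pmf.variance p g = \<mu>2 - \<mu>\<^sup>2"
    unfolding \<mu>_def \<mu>2_def
    by (rule measure_pmf.variance_eq) (auto intro: integrable_measure_pmf_finite fin)
  have "measure_pmf.variance Q (\<lambda>h. \<Sum>i<k. g (h i))
      = measure_pmf.expectation Q (\<lambda>h. (\<Sum>i<k. g (h i))\<^sup>2) - (measure_pmf.expectation Q (\<lambda>h. \<Sum>i<k. g (h i)))\<^sup>2"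
    by (rule measure_pmf.variance_eq) (auto intro: integrable)
  also have "\<dots> = real k * real k * \<mu>\<^sup>2 + real k * (\<mu>2 - \<mu>\<^sup>2) - (real k * \<mu>)\<^sup>2"
    by (simp only: square mean \<mu>_def)
  also have "\<dots> = real k * (\<mu>2 - \<mu>\<^sup>2)"
    by (simp add: power2_eq_square algebra_simps)
  also have "\<dots> = real k * measure_pmf.variance p g"
    by (simp only: variance_p)
  finally show "measure_pmf.variance Q (\<lambda>h. \<Sum>i<k. g (h i)) = k * measure_pmf.variance p g" .
qed

lemma variance_le_expectation_square:
  fixes g :: "'a \<Rightarrow> real"
  assumes "finite (set_pmf p)"
  shows "measure_pmf.variance p g \<le> measure_pmf.expectation p (\<lambda>x. (g x)\<^sup>2)"
proof -
  have "measure_pmf.variance p g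
      = measure_pmf.expectation p (\<lambda>x. (g x)\<^sup>2) - (measure_pmf.expectation p g)\<^sup>2"
    by (rule measure_pmf.variance_eq) (auto intro: integrable_measure_pmf_finite assms)
  then show ?thesis
    by simp
qed

lemma uniform_sampling_error_prob:
  fixes d :: "nat \<Rightarrow> real" and m T \<epsilon> :: real and k :: nat
  assumes "n > 0" and "k > 0" and "\<epsilon> > 0" and "T > 0"
    and d_range: "\<And>u. u < n \<Longrightarrow> 0 \<le> d u \<and> d u \<le> n"
    and sum_d: "(\<Sum>u<n. d u) = m" and "T \<le> m"
    and k_large: "4 * (real n)\<^sup>2 / (\<epsilon>\<^sup>2 * T) \<le> real k"
  shows "measure_pmf.prob (Pi_pmf {..<k} dflt (\<lambda>_. pmf_of_set {..<n}))
           {h. \<not> \<bar>real n / real k * (\<Sum>i<k. d (h i)) - m\<bar> \<le> \<epsilon> * m} \<le> 1 / 4"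
proof -
  define U where "U = pmf_of_set {..<n}"
  define Q where "Q = Pi_pmf {..<k} dflt (\<lambda>_. U)"
  define Y where "Y = (\<lambda>h. \<Sum>i<k. d (h i))"
  have set_U: "set_pmf U = {..<n}"
    unfolding U_def using \<open>n > 0\<close> by (simp add: lessThan_empty_iff)
  have finite_U: "finite (set_pmf U)"
    by (simp add: set_U)
  have expectation_U: "measure_pmf.expectation U \<phi> = (\<Sum>u<n. \<phi> u) / n" for \<phi> :: "nat \<Rightarrow> real"
    unfolding U_def using \<open>n > 0\<close> by (simp add: integral_pmf_of_set lessThan_empty_iff)
  have "measure_pmf.expectation U (\<lambda>u. (d u)\<^sup>2) \<le> (\<Sum>u<n. real n * d u) / n"
    unfolding expectation_U power2_eq_square
    by (intro divide_right_mono sum_mono mult_right_mono) (use d_range in auto)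
  also have "\<dots> = m"
    using \<open>n > 0\<close> by (simp add: sum_distrib_left[symmetric] sum_d)
  finally have "measure_pmf.variance U d \<le> m"
    using variance_le_expectation_square[OF finite_U, of d] by linarith
  moreover note variance_sum_Pi_pmf_iid[OF finite_U, of d k dflt]
  then have mean: "measure_pmf.expectation Q Y = k * m / n"
    and variance: "measure_pmf.variance Q Y = k * measure_pmf.variance U d"
    using d_range unfolding Q_def Y_def by (simp_all add: set_U expectation_U sum_d)
  ultimately have variance_le: "measure_pmf.variance Q Y \<le> k * m"
    by (simp add: mult_left_mono)
  have "m > 0"
    using \<open>T > 0\<close> \<open>T \<le> m\<close> by simp
  define a where "a = \<epsilon> * m * k / n"
  have "a > 0"
    unfolding a_def using assms \<open>m > 0\<close> by simp
  have "{h. \<not> \<bar>real n / real k * Y h - m\<bar> \<le> \<epsilon> * m}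
      \<subseteq> {h \<in> space (measure_pmf Q). a \<le> \<bar>Y h - measure_pmf.expectation Q Y\<bar>}"
  proof safe
    fix h
    assume "\<not> \<bar>real n / real k * Y h - m\<bar> \<le> \<epsilon> * m"
    moreover have "\<bar>real n / real k * Y h - m\<bar> = real n / real k * \<bar>Y h - k * m / n\<bar>"
      using assms(1,2) by (simp add: abs_mult[symmetric] field_simps)
    ultimately show "a \<le> \<bar>Y h - measure_pmf.expectation Q Y\<bar>"
      unfolding a_def mean using assms(1,2) by (simp add: field_simps)
  qed simp
  then have "measure_pmf.prob Q {h. \<not> \<bar>real n / real k * Y h - m\<bar> \<le> \<epsilon> * m}
      \<le> measure_pmf.prob Q {h \<in> space (measure_pmf Q). a \<le> \<bar>Y h - measure_pmf.expectation Q Y\<bar>}"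
    by (intro measure_pmf.finite_measure_mono) simp_all
  also have "\<dots> \<le> measure_pmf.variance Q Y / a\<^sup>2"
    using \<open>a > 0\<close> unfolding Q_def
    by (intro measure_pmf.Chebyshev_inequality integrable_measure_pmf_finite finite_set_Pi_pmf finite_U) simp_all
  also have "\<dots> \<le> k * m / a\<^sup>2"
    using variance_le by (simp add: divide_right_mono)
  also have "\<dots> = (real n)\<^sup>2 / (\<epsilon>\<^sup>2 * m * k)"
    unfolding a_def using assms \<open>m > 0\<close> by (simp add: field_simps power2_eq_square)
  also have "\<dots> \<le> (real n)\<^sup>2 / (\<epsilon>\<^sup>2 * T * k)"
    using assms by (intro divide_left_mono mult_right_mono mult_left_mono) auto
  also have "\<dots> \<le> 1 / 4"
    using k_large assms by (simp add: field_simps)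
  finally show ?thesis
    unfolding Q_def U_def Y_def .
qed

lemma map_pmf_eq_bernoulli_pmf: "map_pmf P Q = bernoulli_pmf (measure_pmf.prob Q {x. P x})"
proof (rule pmf_eqI)
  fix b :: bool
  have "measure_pmf.prob Q (- {x. P x}) = 1 - measure_pmf.prob Q {x. P x}"
    using measure_pmf.prob_compl[of "{x. P x}" Q] by (simp add: Compl_eq_Diff_UNIV)
  moreover have "P -` {True} = {x. P x}" and "P -` {False} = - {x. P x}"
    by auto
  ultimately show "pmf (map_pmf P Q) b = pmf (bernoulli_pmf (measure_pmf.prob Q {x. P x})) b"
    by (cases b) (simp_all add: pmf_map)
qed

lemma prob_half_bad_copies_le:
  assumes bad: "measure_pmf.prob Q {x. bad x} \<le> 1 / 4" and "R > 0"
  shows "measure_pmf.prob (Pi_pmf {..<R} dflt (\<lambda>_. Q)) {g. R \<le> 2 * card {r\<in>{..<R}. bad (g r)}}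
           \<le> exp (- real R / 8)"
proof -
  define q where "q = measure_pmf.prob Q {x. bad x}"
  have q: "0 \<le> q" "q \<le> 1 / 4"
    using bad by (simp_all add: q_def)
  have "map_pmf (\<lambda>g. card {r\<in>{..<R}. bad (g r)}) (Pi_pmf {..<R} dflt (\<lambda>_. Q))
      = map_pmf (\<lambda>b. card {r\<in>{..<R}. b r}) (map_pmf ((\<circ>) bad) (Pi_pmf {..<R} dflt (\<lambda>_. Q)))"
    by (simp add: pmf.map_comp o_def)
  also have "map_pmf ((\<circ>) bad) (Pi_pmf {..<R} dflt (\<lambda>_. Q)) = Pi_pmf {..<R} (bad dflt) (\<lambda>_. bernoulli_pmf q)"
    by (subst Pi_pmf_map[symmetric]) (simp_all add: q_def map_pmf_eq_bernoulli_pmf)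
  also have "map_pmf (\<lambda>b. card {r\<in>{..<R}. b r}) \<dots> = binomial_pmf R q"
    by (rule binomial_pmf_altdef'[symmetric]) (use q in auto)
  finally have count_binomial:
    "map_pmf (\<lambda>g. card {r\<in>{..<R}. bad (g r)}) (Pi_pmf {..<R} dflt (\<lambda>_. Q)) = binomial_pmf R q" .
  have "measure_pmf.prob (Pi_pmf {..<R} dflt (\<lambda>_. Q)) {g. R \<le> 2 * card {r\<in>{..<R}. bad (g r)}}
      = measure_pmf.prob (binomial_pmf R q) {x. R \<le> 2 * x}"
    by (subst count_binomial[symmetric]) simp
  also have "{x. R \<le> 2 * x} = {x. real x \<ge> real R * q + (real R / 2 - real R * q)}"
    by auto
  also have "measure_pmf.prob (binomial_pmf R q) {x. real x \<ge> real R * q + (real R / 2 - real R * q)}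
      \<le> exp (-2 * (real R / 2 - real R * q)\<^sup>2 / real R)"
    using q \<open>R > 0\<close> by (intro binomial_distribution.prob_ge) (auto simp: binomial_distribution_def)
  also have "\<dots> \<le> exp (- real R / 8)"
  proof -
    have "real R * q \<le> real R / 4"
      using mult_left_mono[OF q(2), of "real R"] by simp
    then have "(real R / 4)\<^sup>2 \<le> (real R / 2 - real R * q)\<^sup>2"
      by (intro power_mono) auto
    then show ?thesis
      using \<open>R > 0\<close> by (simp add: field_simps power2_eq_square)
  qed
  finally show ?thesis .
qed

definition median :: "real list \<Rightarrow> real" where
  "median xs = sort xs ! (length xs div 2)"

lemma median_in_interval:
  assumes "xs \<noteq> []" and few_outside: "2 * length (filter (\<lambda>x. x \<notin> {lo..hi}) xs) < length xs"
  shows "median xs \<in> {lo..hi}"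
proof (rule ccontr)
  define ys where "ys = sort xs"
  define h where "h = length xs div 2"
  define outside where "outside = {i. i < length xs \<and> ys ! i \<notin> {lo..hi}}"
  have length_ys: "length ys = length xs" and sorted: "sorted ys"
    by (simp_all add: ys_def)
  have "h < length xs"
    using assms(1) by (simp add: h_def)
  have "length (filter (\<lambda>x. x \<notin> {lo..hi}) xs) = length (filter (\<lambda>x. x \<notin> {lo..hi}) ys)"
    by (simp add: ys_def filter_sort)
  also have "\<dots> = card outside"
    unfolding outside_def length_ys[symmetric] by (rule length_filter_conv_card)
  finally have few: "2 * card outside < length xs"
    using few_outside by simp
  assume "median xs \<notin> {lo..hi}"
  then consider "ys ! h < lo" | "hi < ys ! h"
    by (force simp: median_def ys_def h_def)
  then show False
  proof cases
    case 1
    then have "{..h} \<subseteq> outside"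
      using sorted_nth_mono[OF sorted] \<open>h < length xs\<close> length_ys
      by (fastforce simp: outside_def)
    from card_mono[OF _ this] few show False
      by (simp add: outside_def h_def)
  next
    case 2
    then have "{h..<length xs} \<subseteq> outside"
      using sorted_nth_mono[OF sorted] length_ys
      by (fastforce simp: outside_def)
    from card_mono[OF _ this] few show False
      by (simp add: outside_def h_def)
  qed
qed

definition sample_size :: "nat \<Rightarrow> real \<Rightarrow> nat \<Rightarrow> nat" where
  "sample_size n \<epsilon> T = nat \<lceil>4 * (real n)\<^sup>2 / (\<epsilon>\<^sup>2 * real T)\<rceil>"

definition num_copies :: "nat \<Rightarrow> nat" where
  "num_copies n = nat \<lceil>8 * ln (real n + 2)\<rceil>"

definition flatten_copies :: "nat \<Rightarrow> nat \<Rightarrow> (nat \<Rightarrow> nat \<Rightarrow> 'a) \<Rightarrow> 'a list" where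
  "flatten_copies R k g = map (\<lambda>j. g (j div k) (j mod k)) [0..<R * k]"

definition copy_estimate :: "nat \<Rightarrow> nat \<Rightarrow> nat list \<Rightarrow> nat \<Rightarrow> real" where
  "copy_estimate n k cs r = real n / real k * (\<Sum>i<k. real (cs ! (r * k + i)))"

definition combine_counts :: "nat \<Rightarrow> real \<Rightarrow> nat \<Rightarrow> nat list \<Rightarrow> real" where
  "combine_counts n \<epsilon> T cs =
     (if n \<le> sample_size n \<epsilon> T then real (sum_list cs)
      else median (map (copy_estimate n (sample_size n \<epsilon> T) cs) [0..<num_copies n]))"

definition sampled_vertices :: "nat \<Rightarrow> real \<Rightarrow> nat \<Rightarrow> nat list pmf" where
  "sampled_vertices n \<epsilon> T =
     (if n \<le> sample_size n \<epsilon> T then return_pmf [0..<n]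
      else map_pmf (flatten_copies (num_copies n) (sample_size n \<epsilon> T))
             (Pi_pmf {..<num_copies n} (\<lambda>_. 0) (\<lambda>_. Pi_pmf {..<sample_size n \<epsilon> T} 0 (\<lambda>_. pmf_of_set {..<n}))))"

lemma nth_flatten_copies:
  assumes "r < R" and "i < k"
  shows "flatten_copies R k g ! (r * k + i) = g r i"
proof -
  have "r * k + i < Suc r * k"
    using assms by simp
  also have "\<dots> \<le> R * k"
    using assms by (intro mult_right_mono) auto
  finally show ?thesis
    using assms by (simp add: flatten_copies_def)
qed

lemma length_flatten_copies [simp]: "length (flatten_copies R k g) = R * k"
  by (simp add: flatten_copies_def)

lemma set_flatten_copies:
  assumes "a \<in> set (flatten_copies R k g)"
  shows "\<exists>r<R. \<exists>i<k. a = g r i"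
proof -
  obtain j where "j < R * k" and "a = g (j div k) (j mod k)"
    using assms by (auto simp: flatten_copies_def)
  moreover from \<open>j < R * k\<close> have "k > 0"
    by (cases k) auto
  then have "j div k < R" and "j mod k < k"
    using \<open>j < R * k\<close> by (simp_all add: div_less_iff_less_mult)
  ultimately show ?thesis
    by blast
qed

lemma num_copies_pos: "num_copies n > 0"
  unfolding num_copies_def by simp

lemma exp_num_copies_le: "n > 0 \<Longrightarrow> exp (- real (num_copies n) / 8) \<le> 1 / real n"
proof -
  assume "n > 0"
  have "exp (- real (num_copies n) / 8) \<le> exp (- ln (real n + 2))"
    unfolding num_copies_def by simp linarith
  also have "\<dots> = 1 / (real n + 2)"
    by (simp add: exp_minus inverse_eq_divide)
  also have "\<dots> \<le> 1 / real n"
    using \<open>n > 0\<close> by (simp add: frac_le)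
  finally show ?thesis .
qed

lemma sampled_vertices_support:
  assumes "as \<in> set_pmf (sampled_vertices n \<epsilon> T)"
  shows "\<forall>a\<in>set as. a < n"
    and "length as = (if n \<le> sample_size n \<epsilon> T then n else num_copies n * sample_size n \<epsilon> T)"
proof -
  have "g r i < n"
    if "g \<in> set_pmf (Pi_pmf {..<num_copies n} (\<lambda>_. 0) (\<lambda>_. Pi_pmf {..<k} 0 (\<lambda>_. pmf_of_set {..<n})))"
      and "r < num_copies n" and "i < k" and "k < n" for g r i k
    using that by (auto simp: set_Pi_pmf PiE_dflt_def lessThan_empty_iff)
  then show "\<forall>a\<in>set as. a < n"
    using assms by (auto simp: sampled_vertices_def split: if_splits dest!: set_flatten_copies)
  show "length as = (if n \<le> sample_size n \<epsilon> T then n else num_copies n * sample_size n \<epsilon> T)"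
    using assms by (auto simp: sampled_vertices_def split: if_splits)
qed

lemma map_flatten_copies: "map h (flatten_copies R k g) = flatten_copies R k (\<lambda>r i. h (g r i))"
  by (simp add: flatten_copies_def)

lemma median_copy_estimates_accurate:
  fixes D :: "nat \<Rightarrow> nat" and m T :: nat and \<epsilon> :: real
  assumes "n > 0" and "0 < \<epsilon>" and "1 \<le> T" and "T \<le> m"
    and sum_D: "(\<Sum>u<n. D u) = m" and D_le: "\<And>u. D u \<le> n"
  defines "k \<equiv> sample_size n \<epsilon> T" and "R \<equiv> num_copies n"
  shows "1 - 1 / n \<le> measure_pmf.prob (Pi_pmf {..<R} (\<lambda>_. 0) (\<lambda>_. Pi_pmf {..<k} 0 (\<lambda>_. pmf_of_set {..<n})))
           {g. \<bar>median (map (copy_estimate n k (map D (flatten_copies R k g))) [0..<R]) - m\<bar> \<le> \<epsilon> * m}"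
proof -
  define G where "G = Pi_pmf {..<R} (\<lambda>_. 0) (\<lambda>_. Pi_pmf {..<k} 0 (\<lambda>_. pmf_of_set {..<n}))"
  define X where "X h = real n / real k * (\<Sum>i<k. real (D (h i)))" for h
  define bad where "bad h \<longleftrightarrow> \<not> \<bar>X h - m\<bar> \<le> \<epsilon> * m" for h
  define few_bad where "few_bad g \<longleftrightarrow> 2 * card {r\<in>{..<R}. bad (g r)} < R" for g
  have k_large: "4 * (real n)\<^sup>2 / (\<epsilon>\<^sup>2 * real T) \<le> real k"
    unfolding k_def sample_size_def by linarith
  moreover have "0 < 4 * (real n)\<^sup>2 / (\<epsilon>\<^sup>2 * real T)"
    using assms by simp
  ultimately have "k > 0"
    by linarith
  have "measure_pmf.prob (Pi_pmf {..<k} 0 (\<lambda>_. pmf_of_set {..<n})) {h. bad h} \<le> 1 / 4"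
    unfolding bad_def X_def
    by (rule uniform_sampling_error_prob[OF \<open>n > 0\<close> \<open>k > 0\<close> \<open>0 < \<epsilon>\<close> _ _ _ _ k_large])
      (use assms in \<open>simp_all flip: of_nat_sum\<close>)
  then have "measure_pmf.prob G {g. \<not> few_bad g} \<le> exp (- real R / 8)"
    unfolding G_def few_bad_def not_less
    using num_copies_pos[of n] by (intro prob_half_bad_copies_le) (simp_all add: R_def)
  also have "\<dots> \<le> 1 / n"
    unfolding R_def using \<open>n > 0\<close> by (rule exp_num_copies_le)
  finally have "1 - 1 / n \<le> measure_pmf.prob G {g. few_bad g}"
    using measure_pmf.prob_compl[of "{g. few_bad g}" G] by (simp add: Compl_eq_Diff_UNIV[symmetric] Collect_neg_eq)
  also have "\<dots> \<le> measure_pmf.prob G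
      {g. \<bar>median (map (copy_estimate n k (map D (flatten_copies R k g))) [0..<R]) - m\<bar> \<le> \<epsilon> * m}"
  proof (intro measure_pmf.finite_measure_mono subsetI CollectI)
    fix g
    assume "g \<in> {g. few_bad g}"
    have copies: "map (copy_estimate n k (map D (flatten_copies R k g))) [0..<R] = map (\<lambda>r. X (g r)) [0..<R]"
      by (simp add: copy_estimate_def X_def map_flatten_copies nth_flatten_copies)
    have "length (filter (\<lambda>x. x \<notin> {m - \<epsilon> * m..m + \<epsilon> * m}) (map (\<lambda>r. X (g r)) [0..<R]))
        = card {r\<in>{..<R}. bad (g r)}"
      unfolding length_filter_conv_card bad_def by (intro arg_cong[where f = card]) (auto simp: abs_le_iff)
    then have "median (map (\<lambda>r. X (g r)) [0..<R]) \<in> {m - \<epsilon> * m..m + \<epsilon> * m}"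
      using \<open>g \<in> {g. few_bad g}\<close> num_copies_pos[of n]
      by (intro median_in_interval) (auto simp: few_bad_def R_def)
    then show "\<bar>median (map (copy_estimate n k (map D (flatten_copies R k g))) [0..<R]) - m\<bar> \<le> \<epsilon> * m"
      unfolding copies by (simp add: abs_le_iff)
  qed simp
  finally show ?thesis
    unfolding G_def .
qed

lemma combine_counts_accurate:
  fixes D :: "nat \<Rightarrow> nat" and m T :: nat and \<epsilon> :: real
  assumes "n > 0" and "0 < \<epsilon>" and "1 \<le> T" and "T \<le> m"
    and "(\<Sum>u<n. D u) = m" and "\<And>u. D u \<le> n"
  shows "1 - 1 / n \<le> measure_pmf.prob (sampled_vertices n \<epsilon> T)
           {as. \<bar>combine_counts n \<epsilon> T (map D as) - m\<bar> \<le> \<epsilon> * m}"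
proof (cases "n \<le> sample_size n \<epsilon> T")
  case True
  have "sum_list (map D [0..<n]) = m"
    using assms by (simp add: sum_list_distinct_conv_sum_set atLeast0LessThan)
  then have "measure_pmf.prob (sampled_vertices n \<epsilon> T)
      {as. \<bar>combine_counts n \<epsilon> T (map D as) - m\<bar> \<le> \<epsilon> * m} = 1"
    using True \<open>0 < \<epsilon>\<close> by (simp add: sampled_vertices_def combine_counts_def)
  then show ?thesis
    by simp
next
  case False
  then show ?thesis
    using median_copy_estimates_accurate[OF assms]
    by (simp add: sampled_vertices_def combine_counts_def map_flatten_copies vimage_def)
qed

lemma one_le_ln_plus_2: "1 \<le> n \<Longrightarrow> 1 \<le> ln (real n + 2)"
proof -
  assume "1 \<le> n"
  then have "exp 1 \<le> real n + 2"
    using exp_le by linarith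
  then show ?thesis
    by (subst ln_ge_iff) auto
qed

lemma num_copies_le: "1 \<le> n \<Longrightarrow> real (num_copies n) \<le> 9 * ln (real n + 2)"
  using one_le_ln_plus_2[of n] unfolding num_copies_def by linarith

lemma sample_size_le:
  assumes "0 < \<epsilon>" and "\<epsilon> < 1" and "1 \<le> T" and "real T \<le> (real n)\<^sup>2"
  shows "real (sample_size n \<epsilon> T) \<le> 5 / \<epsilon>\<^sup>2 * ((real n)\<^sup>2 / T)"
proof -
  define x where "x = 4 * (real n)\<^sup>2 / (\<epsilon>\<^sup>2 * real T)"
  have "1 \<le> (real n)\<^sup>2 / T" and "1 \<le> 1 / \<epsilon>\<^sup>2"
    using assms by (simp_all add: power_le_one_iff)
  then have "4 \<le> x"
    using mult_mono[of 1 "1 / \<epsilon>\<^sup>2" 1 "(real n)\<^sup>2 / T"] by (simp add: x_def field_simps)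
  moreover from \<open>4 \<le> x\<close> have "real (sample_size n \<epsilon> T) \<le> x + 1"
    unfolding sample_size_def x_def[symmetric] by linarith
  moreover have "5 / \<epsilon>\<^sup>2 * ((real n)\<^sup>2 / T) = x + x / 4"
    by (simp add: x_def field_simps)
  ultimately show ?thesis
    by linarith
qed

lemma tracked_vertices_le:
  assumes "1 \<le> n" and "0 < \<epsilon>" and "\<epsilon> < 1" and "1 \<le> T" and "real T \<le> (real n)\<^sup>2"
  shows "real (if n \<le> sample_size n \<epsilon> T then n else num_copies n * sample_size n \<epsilon> T)
           \<le> 9 * ln (real n + 2) * (5 / \<epsilon>\<^sup>2 * min (real n) ((real n)\<^sup>2 / T))"
proof -
  define k where "k = sample_size n \<epsilon> T"
  define bound where "bound = 5 / \<epsilon>\<^sup>2 * min (real n) ((real n)\<^sup>2 / T)"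
  have "\<epsilon>\<^sup>2 \<le> 1"
    using assms by (simp add: power_le_one)
  then have "real n \<le> 5 / \<epsilon>\<^sup>2 * real n"
    using assms by (simp add: field_simps)
  moreover have "real k \<le> 5 / \<epsilon>\<^sup>2 * ((real n)\<^sup>2 / T)"
    unfolding k_def by (rule sample_size_le[OF assms(2-5)])
  ultimately have "min (real n) (real k) \<le> min (5 / \<epsilon>\<^sup>2 * real n) (5 / \<epsilon>\<^sup>2 * ((real n)\<^sup>2 / T))"
    by (rule min.mono)
  then have "min (real n) (real k) \<le> bound"
    unfolding bound_def by (simp add: min_mult_distrib_left)
  have "1 \<le> 9 * ln (real n + 2)" and "0 \<le> bound"
    using one_le_ln_plus_2[OF assms(1)] assms by (simp_all add: bound_def)
  show ?thesis
  proof (cases "n \<le> k")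
    case True
    with \<open>min (real n) (real k) \<le> bound\<close> have "real n \<le> 1 * bound"
      by simp
    also have "\<dots> \<le> 9 * ln (real n + 2) * bound"
      using \<open>1 \<le> 9 * ln (real n + 2)\<close> \<open>0 \<le> bound\<close> by (rule mult_right_mono)
    finally show ?thesis
      using True unfolding k_def bound_def by simp
  next
    case False
    with \<open>min (real n) (real k) \<le> bound\<close> have "real k \<le> bound"
      by simp
    then have "real (num_copies n) * real k \<le> 9 * ln (real n + 2) * bound"
      using num_copies_le[OF assms(1)] \<open>0 \<le> bound\<close> by (intro mult_mono) auto
    then show ?thesis
      using False unfolding k_def bound_def by simp
  qed
qed

lemma space_bound:
  assumes "1 \<le> n" and "0 < \<epsilon>" and "\<epsilon> < 1" and "1 \<le> T" and "real T \<le> (real n)\<^sup>2"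
  shows "real (1 + 3 * (if n \<le> sample_size n \<epsilon> T then n else num_copies n * sample_size n \<epsilon> T))
           \<le> 136 * ln (real n + 2) * (1 / \<epsilon>)\<^sup>2 * min (real n) ((real n)\<^sup>2 / T)"
proof -
  define t where "t = (if n \<le> sample_size n \<epsilon> T then n else num_copies n * sample_size n \<epsilon> T)"
  define Z where "Z = ln (real n + 2) * (1 / \<epsilon>)\<^sup>2 * min (real n) ((real n)\<^sup>2 / T)"
  have "1 \<le> ln (real n + 2)" and "1 \<le> (1 / \<epsilon>)\<^sup>2" and "1 \<le> min (real n) ((real n)\<^sup>2 / T)"
    using one_le_ln_plus_2 assms by (simp_all add: power_le_one power_one_over)
  then have "1 * 1 * 1 \<le> Z"
    unfolding Z_def by (intro mult_mono) auto
  moreover have "real t \<le> 45 * Z"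
    using tracked_vertices_le[OF assms] by (simp add: t_def Z_def power_one_over)
  ultimately have "real (1 + 3 * t) \<le> 136 * Z"
    by simp
  then show ?thesis
    by (simp add: t_def Z_def mult.assoc)
qed

definition initial_state :: "nat list \<Rightarrow> counter_state" where
  "initial_state as = (0, map (\<lambda>a. (a, 0, 0)) as)"

definition mono_init :: "nat \<Rightarrow> real \<Rightarrow> nat \<Rightarrow> nat list pmf" where
  "mono_init n \<epsilon> T = map_pmf (encode_state \<circ> initial_state) (sampled_vertices n \<epsilon> T)"

definition mono_update :: "nat \<Rightarrow> real \<Rightarrow> nat \<Rightarrow> nat list \<Rightarrow> va_item \<Rightarrow> nat list pmf" where
  "mono_update n \<epsilon> T ws x = return_pmf (encode_state (counter_step n (decode_state ws) x))"

definition mono_estimate :: "nat \<Rightarrow> real \<Rightarrow> nat \<Rightarrow> nat list \<Rightarrow> real" where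
  "mono_estimate n \<epsilon> T ws = combine_counts n \<epsilon> T (map (snd \<circ> snd) (snd (decode_state ws)))"

abbreviation mono_traces :: "nat \<Rightarrow> real \<Rightarrow> nat \<Rightarrow> va_item list \<Rightarrow> nat list list pmf" where
  "mono_traces n \<epsilon> T s \<equiv> bind_pmf (mono_init n \<epsilon> T) (\<lambda>ws. va_run (mono_update n \<epsilon> T) ws s)"

lemma mono_traces_eq:
  "mono_traces n \<epsilon> T s
     = map_pmf (\<lambda>as. map encode_state (fold_trace (counter_step n) (initial_state as) s)) (sampled_vertices n \<epsilon> T)"
proof -
  have "mono_update n \<epsilon> T = (\<lambda>ws x. return_pmf (encode_state (counter_step n (decode_state ws) x)))"
    by (intro ext) (simp add: mono_update_def)
  then have run: "va_run (mono_update n \<epsilon> T) (encode_state st) s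
      = return_pmf (map encode_state (fold_trace (counter_step n) st s))" for st
    by (simp add: va_run_return_pmf fold_trace_map)
  have "bind_pmf (mono_init n \<epsilon> T) (\<lambda>ws. va_run (mono_update n \<epsilon> T) ws s)
      = bind_pmf (sampled_vertices n \<epsilon> T) (\<lambda>as. va_run (mono_update n \<epsilon> T) (encode_state (initial_state as)) s)"
    unfolding mono_init_def bind_map_pmf o_def ..
  also have "\<dots> = map_pmf (\<lambda>as. map encode_state (fold_trace (counter_step n) (initial_state as) s))
      (sampled_vertices n \<epsilon> T)"
    unfolding run map_pmf_def ..
  finally show ?thesis .
qed

lemma space_used_fold_trace:
  "space_used (map encode_state (fold_trace (counter_step n) st s)) = 1 + 3 * length (snd st)"
proof -
  have "\<forall>t\<in>set (fold_trace (counter_step n) st s). length (snd t) = length (snd st)"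
    by (rule fold_trace_invariant) simp_all
  then have "length ` set (map encode_state (fold_trace (counter_step n) st s))
      = (\<lambda>_. 1 + 3 * length (snd st)) ` set (fold_trace (counter_step n) st s)"
    by (simp add: image_image length_encode_state)
  also have "\<dots> = {1 + 3 * length (snd st)}"
    by (rule image_constant[OF start_in_fold_trace])
  finally show ?thesis
    by (simp add: space_used_def)
qed

context va_order
begin

lemma mono_estimate_last:
  "mono_estimate n \<epsilon> T (last (map encode_state (fold_trace (counter_step n) (initial_state as)
       (concat (map (va_block f \<sigma> L) [0..<n])))))
     = combine_counts n \<epsilon> T (map (later_mono_degree f) as)"
  using counts_after_stream[of 0 as f]
  by (simp add: mono_estimate_def last_map last_fold_trace initial_state_def)

lemma counter_trace_words_le:
  assumes "coloring n C f" and "\<forall>a\<in>set as. a < n"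
  shows "\<forall>st\<in>set (fold_trace (counter_step n) (initial_state as) (concat (map (va_block f \<sigma> L) [0..<n]))).
           set (encode_state st) \<subseteq> {..n + C}"
proof (rule fold_trace_invariant)
  show "set (encode_state (initial_state as)) \<subseteq> {..n + C}"
    using assms(2) by (force simp: initial_state_def set_encode_state)
  show "set (encode_state (counter_step n st x)) \<subseteq> {..n + C}"
    if "set (encode_state st) \<subseteq> {..n + C}" and "x \<in> set (concat (map (va_block f \<sigma> L) [0..<n]))" for st x
  proof (rule counter_step_bounded[OF that(1)])
    fix v col
    assume "x = Vtx v col"
    with that(2) have "col \<le> C"
      by (intro vertex_colours_le[OF assms(1)]) simp
    then show "col \<le> n + C"
      by simp
  qed simp
qed

end

lemma mono_edges_card_le:
  assumes "simple_graph n E"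
  shows "card (mono_edges E f) \<le> n * n"
proof -
  have "mono_edges E f \<subseteq> (\<lambda>(u, v). {u, v}) ` ({..<n} \<times> {..<n})"
  proof
    fix e
    assume "e \<in> mono_edges E f"
    then obtain u v where "e = {u, v}" and "u < n" and "v < n"
      using assms unfolding mono_edges_def simple_graph_def by blast
    then show "e \<in> (\<lambda>(u, v). {u, v}) ` ({..<n} \<times> {..<n})"
      by (intro image_eqI[of _ _ "(u, v)"]) simp_all
  qed
  then have "card (mono_edges E f) \<le> card ((\<lambda>(u, v). {u, v}) ` ({..<n} \<times> {..<n}))"
    by (intro card_mono) auto
  also have "\<dots> \<le> n * n"
    using card_image_le[of "{..<n} \<times> {..<n}" "\<lambda>(u, v). {u, v}"] by simp
  finally show ?thesis .
qed

lemma two_le_vertices_if_mono_edge: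
  assumes "simple_graph n E" and "mono_edges E f \<noteq> {}"
  shows "2 \<le> n"
proof -
  obtain e where "e \<in> E"
    using assms(2) unfolding mono_edges_def by blast
  then obtain u v where "u \<noteq> v" and "u < n" and "v < n"
    using assms(1) unfolding simple_graph_def by blast
  then show ?thesis
    by linarith
qed

lemma real_le_square_if_le_mono_edges:
  assumes "simple_graph n E" and "T \<le> card (mono_edges E f)"
  shows "real T \<le> (real n)\<^sup>2"
proof -
  have "T \<le> n * n"
    using assms(2) mono_edges_card_le[OF assms(1), of f] by linarith
  then show ?thesis
    by (simp add: power2_eq_square flip: of_nat_mult)
qed

lemma set_pmf_mono_traces:
  assumes "tr \<in> set_pmf (mono_traces n \<epsilon> T s)"
  obtains as where "as \<in> set_pmf (sampled_vertices n \<epsilon> T)"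
    and "tr = map encode_state (fold_trace (counter_step n) (initial_state as) s)"
  using assms by (auto simp: mono_traces_eq)

lemma mono_traces_words_less:
  assumes "coloring n C f" and "va_stream n E f s"
  shows "\<forall>tr\<in>set_pmf (mono_traces n \<epsilon> T s). \<forall>ws\<in>set tr. \<forall>w\<in>set ws. w < n + C + 2"
proof (intro ballI)
  fix tr ws w
  assume "tr \<in> set_pmf (mono_traces n \<epsilon> T s)" and "ws \<in> set tr" and "w \<in> set ws"
  obtain \<sigma> L where order: "va_order n E \<sigma> L" and s: "s = concat (map (va_block f \<sigma> L) [0..<n])"
    using assms(2) by (rule va_streamE)
  obtain as where "as \<in> set_pmf (sampled_vertices n \<epsilon> T)"
    and "tr = map encode_state (fold_trace (counter_step n) (initial_state as) s)"
    using \<open>tr \<in> set_pmf (mono_traces n \<epsilon> T s)\<close> by (rule set_pmf_mono_traces)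
  moreover from this(2) \<open>ws \<in> set tr\<close> obtain st
    where "st \<in> set (fold_trace (counter_step n) (initial_state as) s)" and "ws = encode_state st"
    by auto
  ultimately have "set ws \<subseteq> {..n + C}"
    using va_order.counter_trace_words_le[OF order assms(1)] sampled_vertices_support(1)
    unfolding s by blast
  with \<open>w \<in> set ws\<close> show "w < n + C + 2"
    by auto
qed

lemma mono_traces_accurate:
  assumes "0 < \<epsilon>" and "1 \<le> T" and "simple_graph n E" and "T \<le> card (mono_edges E f)"
    and "va_stream n E f s"
  shows "1 - 1 / real n \<le> measure_pmf.prob (mono_traces n \<epsilon> T s)
           {tr. \<bar>mono_estimate n \<epsilon> T (last tr) - card (mono_edges E f)\<bar> \<le> \<epsilon> * card (mono_edges E f)}"
proof -
  obtain \<sigma> L where order: "va_order n E \<sigma> L" and s: "s = concat (map (va_block f \<sigma> L) [0..<n])"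
    using assms(5) by (rule va_streamE)
  have "0 < n"
    using two_le_vertices_if_mono_edge[OF assms(3), of f] assms(2,4) by fastforce
  then have "1 - 1 / real n \<le> measure_pmf.prob (sampled_vertices n \<epsilon> T)
      {as. \<bar>combine_counts n \<epsilon> T (map (va_order.later_mono_degree n \<sigma> L f) as) - card (mono_edges E f)\<bar>
             \<le> \<epsilon> * card (mono_edges E f)}"
    using assms(1,2,4)
    by (intro combine_counts_accurate va_order.sum_later_mono_degree[OF order assms(3)]
        va_order.later_mono_degree_le[OF order])
  then show ?thesis
    by (simp add: mono_traces_eq s vimage_def va_order.mono_estimate_last[OF order])
qed

lemma mono_traces_space:
  assumes "0 < \<epsilon>" and "\<epsilon> < 1" and "1 \<le> T" and "simple_graph n E" and "T \<le> card (mono_edges E f)"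
  shows "measure_pmf.prob (mono_traces n \<epsilon> T s)
           {tr. real (space_used tr) \<le> 136 * ln (real n + 2) * (1 / \<epsilon>)\<^sup>2 * min (real n) ((real n)\<^sup>2 / T)} = 1"
proof -
  have "1 \<le> n"
    using two_le_vertices_if_mono_edge[OF assms(4), of f] assms(3,5) by fastforce
  have "real (space_used tr) \<le> 136 * ln (real n + 2) * (1 / \<epsilon>)\<^sup>2 * min (real n) ((real n)\<^sup>2 / T)"
    if tr: "tr \<in> set_pmf (mono_traces n \<epsilon> T s)" for tr
  proof -
    obtain as where "as \<in> set_pmf (sampled_vertices n \<epsilon> T)"
      and "tr = map encode_state (fold_trace (counter_step n) (initial_state as) s)"
      using tr by (rule set_pmf_mono_traces)
    then have "space_used tr
        = 1 + 3 * (if n \<le> sample_size n \<epsilon> T then n else num_copies n * sample_size n \<epsilon> T)"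
      using sampled_vertices_support(2) by (simp add: space_used_fold_trace initial_state_def)
    then show ?thesis
      using space_bound[OF \<open>1 \<le> n\<close> assms(1-3) real_le_square_if_le_mono_edges[OF assms(4,5)]] by simp
  qed
  then show ?thesis
    by (subst measure_pmf.prob_eq_1) (auto intro!: AE_pmfI)
qed

theorem theorem3p1:
  shows "\<exists>(K::nat) (c::real) (a::real) (b::real) (D::real)
           (init :: nat \<Rightarrow> real \<Rightarrow> nat \<Rightarrow> nat list pmf)
           (upd :: nat \<Rightarrow> real \<Rightarrow> nat \<Rightarrow> nat list \<Rightarrow> va_item \<Rightarrow> nat list pmf)
           (out :: nat \<Rightarrow> real \<Rightarrow> nat \<Rightarrow> nat list \<Rightarrow> real).
     c > 0 \<and>
     (\<forall>(n::nat) (\<epsilon>::real) (T::nat) (C::nat) (E::nat set set) (f::nat \<Rightarrow> nat) (s::va_item list).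
        0 < \<epsilon> \<and> \<epsilon> < 1 \<and> T \<ge> 1 \<and> simple_graph n E \<and> coloring n C f \<and>
        card (mono_edges E f) \<ge> T \<and> va_stream n E f s \<longrightarrow>
        (let P = bind_pmf (init n \<epsilon> T) (\<lambda>s0. va_run (upd n \<epsilon> T) s0 s);
             m = real (card (mono_edges E f))
         in (\<forall>tr\<in>set_pmf P. \<forall>st\<in>set tr. \<forall>w\<in>set st. w < (n + C + 2) ^ K) \<and>
            measure_pmf.prob P {tr. \<bar>out n \<epsilon> T (last tr) - m\<bar> \<le> \<epsilon> * m}
              \<ge> 1 - 1 / real n powr c \<and>
            measure_pmf.prob P
              {tr. real (space_used tr)
                     \<le> D * ln (real n + 2) powr a * (1 / \<epsilon>) powr b
                         * min (real n) ((real n)\<^sup>2 / real T)}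
              \<ge> 1 - 1 / real n powr c))"
proof (rule exI[of _ 1], rule exI[of _ 1], rule exI[of _ 1], rule exI[of _ 2], rule exI[of _ 136],
    rule exI[of _ mono_init], rule exI[of _ mono_update], rule exI[of _ mono_estimate],
    rule conjI, simp, intro allI impI, unfold Let_def, elim conjE, intro conjI, goal_cases)
  case (1 n \<epsilon> T C E f s)
  then show ?case
    using mono_traces_words_less[of n C f E s \<epsilon> T] by simp
next
  case (2 n \<epsilon> T C E f s)
  then show ?case
    using mono_traces_accurate[of \<epsilon> T n E f s] by simp
next
  case (3 n \<epsilon> T C E f s)
  then show ?case
    using mono_traces_space[of \<epsilon> T n E f s] by simp
qed

end
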